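(* Let $F=\frac19\begin{pmatrix}1&1&1\\1&1&1\\1&1&1\end{pmatrix}$ (box blur filter). Then the equation $F*X=B$ with the zero boundary condition, for unknown $X\in\mathbb{R}^{m\times n}$, has a unique solution for every $B\in\mathbb{R}^{m\times n}$ if and only if $m,n\notin\{3l-1: l\in\mathbb{N}\}$.
   Context: $\mathbb{N}=\{1,2,3,\dots\}$. For $F=[f_{ij}]\in\mathbb{R}^{3\times3}$ and $X=[x_{ij}]\in\mathbb{R}^{m\times n}$, the convolution $F*X\in\mathbb{R}^{m\times n}$ is defined by $[F*X]_{ij}=\sum_{l_1=1}^3\sum_{l_2=1}^3 f_{l_1l_2}\,x_{i-l_1+2,\,j-l_2+2}$ for $1\le i\le m$, $1\le j\le n$, where under the zero boundary condition all values $x_{ij}$ with $i\in\{0,m+1\}$ or $j\in\{0,n+1\}$ are $0$. *)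

theory Defs
  imports "HOL-Analysis.Analysis"
begin

text \<open>An m x n real matrix is represented as a function nat => nat => real whose
  entries are indexed by 1..m and 1..n; entries outside this range are 0
  (this encodes both the matrix carrier and the zero boundary condition).\<close>

definition mats :: "nat \<Rightarrow> nat \<Rightarrow> (nat \<Rightarrow> nat \<Rightarrow> real) set" where
  "mats m n = {X. \<forall>i j. \<not> (1 \<le> i \<and> i \<le> m \<and> 1 \<le> j \<and> j \<le> n) \<longrightarrow> X i j = 0}"

definition zb :: "nat \<Rightarrow> nat \<Rightarrow> (nat \<Rightarrow> nat \<Rightarrow> real) \<Rightarrow> int \<Rightarrow> int \<Rightarrow> real" where
  "zb m n X i j = (if 1 \<le> i \<and> i \<le> int m \<and> 1 \<le> j \<and> j \<le> int n then X (nat i) (nat j) else 0)"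

definition conv :: "nat \<Rightarrow> nat \<Rightarrow> (nat \<Rightarrow> nat \<Rightarrow> real) \<Rightarrow> (nat \<Rightarrow> nat \<Rightarrow> real) \<Rightarrow> (nat \<Rightarrow> nat \<Rightarrow> real)" where
  "conv m n F X = (\<lambda>i j. if 1 \<le> i \<and> i \<le> m \<and> 1 \<le> j \<and> j \<le> n then
      (\<Sum>l1\<in>{1..3::nat}. \<Sum>l2\<in>{1..3::nat}.
          F l1 l2 * zb m n X (int i - int l1 + 2) (int j - int l2 + 2))
    else 0)"

definition box_blur :: "nat \<Rightarrow> nat \<Rightarrow> real" where
  "box_blur i j = 1/9"

end

(*
  The box blur is the rank-one filter (1/9) u u^T with u = (1, 1, 1), so the convolution
  factors as 9 (F * X) = T_m X T_n, where T_k is the tridiagonal k x k matrix of ones.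
  Hence F * X = B is uniquely solvable for every B iff T_m and T_n are invertible.
  A solution of T_k x = b is determined by x_1 through the recurrence
  x_(i+1) = b_i - x_i - x_(i-1) with x_0 = 0, and the boundary condition x_(k+1) = 0 is an
  affine equation in x_1 whose coefficient is the value at k + 1 of the 3-periodic sequence
  0, 1, -1, 0, 1, -1, ...  This coefficient is a unit unless k = 2 (mod 3); in that case
  the periodic sequence itself, cut off outside 1..k, is a nonzero kernel vector of T_k.
*)
theory Submission
  imports Defs
begin

lemma bij_betw_self_iff_ex1:
  assumes "f ` A \<subseteq> A"
  shows "bij_betw f A A \<longleftrightarrow> (\<forall>b\<in>A. \<exists>!x. x \<in> A \<and> f x = b)"
proof
  assume bij: "bij_betw f A A"
  show "\<forall>b\<in>A. \<exists>!x. x \<in> A \<and> f x = b"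
  proof
    fix b
    assume "b \<in> A"
    then obtain x where "x \<in> A" "f x = b"
      using bij by (metis bij_betw_imp_surj_on imageE)
    then show "\<exists>!x. x \<in> A \<and> f x = b"
      using bij_betw_imp_inj_on[OF bij] by (metis inj_onD)
  qed
next
  assume ex1: "\<forall>b\<in>A. \<exists>!x. x \<in> A \<and> f x = b"
  have "inj_on f A"
    by (rule inj_onI) (use assms ex1 in \<open>metis image_subset_iff\<close>)
  moreover have "A \<subseteq> f ` A"
    using ex1 by (metis image_eqI subsetI)
  ultimately show "bij_betw f A A"
    using assms by (simp add: bij_betw_def subset_antisym)
qed

definition vecs :: "nat \<Rightarrow> (nat \<Rightarrow> 'a::zero) set" where
  "vecs k = {x. \<forall>i. i \<notin> {1..k} \<longrightarrow> x i = 0}"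

definition box_sum :: "nat \<Rightarrow> (nat \<Rightarrow> 'a::monoid_add) \<Rightarrow> nat \<Rightarrow> 'a" where
  "box_sum k x i = (if i \<in> {1..k} then x (i - 1) + x i + x (i + 1) else 0)"

lemma box_sum_in_vecs: "box_sum k x \<in> vecs k"
  by (simp add: vecs_def box_sum_def)

lemma box_sum_zero: "box_sum k (\<lambda>_. 0) = (\<lambda>_. 0)"
  by (simp add: box_sum_def fun_eq_iff)

lemma box_sum_mult_left:
  fixes x :: "nat \<Rightarrow> 'a::semiring_0"
  shows "box_sum k (\<lambda>i. c * x i) = (\<lambda>i. c * box_sum k x i)"
  by (simp add: box_sum_def fun_eq_iff distrib_left)

lemma box_sum_mult_right:
  fixes x :: "nat \<Rightarrow> 'a::semiring_0"
  shows "box_sum k (\<lambda>i. x i * c) = (\<lambda>i. box_sum k x i * c)"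
  by (simp add: box_sum_def fun_eq_iff distrib_right)

definition period3 :: "nat \<Rightarrow> 'a::ring_1" where
  "period3 i = (if i mod 3 = 0 then 0 else if i mod 3 = 1 then 1 else -1)"

lemma period3_0 [simp]: "period3 0 = 0"
  and period3_1 [simp]: "period3 (Suc 0) = 1"
  by (simp_all add: period3_def)

lemma period3_Suc_Suc: "period3 (Suc (Suc i)) = - period3 (Suc i) - period3 i"
proof -
  consider "i mod 3 = 0" | "i mod 3 = 1" | "i mod 3 = 2"
    by linarith
  then show ?thesis
    by cases (simp_all add: period3_def mod_Suc)
qed

lemma period3_mult_self: "i mod 3 \<noteq> 0 \<Longrightarrow> period3 i * period3 i = 1"
  by (simp add: period3_def)

definition period3_on :: "nat \<Rightarrow> nat \<Rightarrow> 'a::ring_1" where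
  "period3_on k i = (if i \<in> {1..k} then period3 i else 0)"

lemma period3_on_in_vecs: "period3_on k \<in> vecs k"
  by (simp add: period3_on_def vecs_def)

lemma box_sum_period3_on:
  assumes "k mod 3 = 2"
  shows "box_sum k (period3_on k) = (\<lambda>_. 0 :: 'a::ring_1)"
proof
  have v: "period3_on k i = (period3 i :: 'a)" if "i \<le> k + 1" for i
    using that assms by (cases "i = k + 1") (auto simp: period3_on_def period3_def mod_Suc)
  fix i
  show "box_sum k (period3_on k) i = (0 :: 'a)"
  proof (cases "i \<in> {1..k}")
    case True
    then obtain j where "i = Suc j" "Suc (Suc j) \<le> k + 1"
      by (cases i) auto
    then show ?thesis
      using v[of j] v[of "Suc j"] v[of "Suc (Suc j)"] by (simp add: box_sum_def period3_Suc_Suc)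
  qed (auto simp: box_sum_def)
qed

text \<open>The solution of the recurrence imposed by \<open>box_sum k x = b\<close>, shot from
  \<open>x 0 = 0\<close> and \<open>x 1 = t\<close>.\<close>
fun shoot :: "(nat \<Rightarrow> 'a::ring_1) \<Rightarrow> 'a \<Rightarrow> nat \<Rightarrow> 'a" where
  "shoot b t 0 = 0"
| "shoot b t (Suc 0) = t"
| "shoot b t (Suc (Suc i)) = b (Suc i) - shoot b t (Suc i) - shoot b t i"

lemma shoot_eq: "shoot b t i = shoot b 0 i + t * period3 i"
  by (induction i rule: induct_nat_012)
    (simp_all add: period3_Suc_Suc algebra_simps)

lemma box_sum_solution_eq_shoot:
  assumes "x \<in> vecs k" "box_sum k x = b" "i \<le> k + 1"
  shows "x i = shoot b (x 1) i"
  using assms(3)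
proof (induction i rule: induct_nat_012)
  case 0
  then show ?case using assms(1) by (simp add: vecs_def)
next
  case (ge2 j)
  have "x j + x (Suc j) + x (Suc (Suc j)) = b (Suc j)"
    using ge2(3) assms(2) by (auto simp: box_sum_def)
  then show ?case using ge2 by (simp add: algebra_simps)
qed simp

lemma inj_on_box_sum:
  assumes "k mod 3 \<noteq> 2"
  shows "inj_on (box_sum k) (vecs k :: (nat \<Rightarrow> 'a::ring_1) set)"
proof (rule inj_onI)
  fix x y :: "nat \<Rightarrow> 'a"
  assume x: "x \<in> vecs k" and y: "y \<in> vecs k" and eq: "box_sum k x = box_sum k y"
  let ?b = "box_sum k y" and ?p = "period3 (k + 1) :: 'a"
  have "x (k + 1) = 0" "y (k + 1) = 0"
    using x y by (simp_all add: vecs_def)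
  then have "shoot ?b 0 (k + 1) + x 1 * ?p = 0" "shoot ?b 0 (k + 1) + y 1 * ?p = 0"
    using box_sum_solution_eq_shoot[OF x eq, of "k + 1"]
      box_sum_solution_eq_shoot[OF y refl, of "k + 1"] shoot_eq[of ?b "x 1" "k + 1"] shoot_eq[of ?b "y 1" "k + 1"]
    by simp_all
  then have "x 1 * ?p = y 1 * ?p"
    by (metis add_left_cancel)
  moreover have "?p * ?p = 1"
    using assms(1) by (intro period3_mult_self) (auto simp: mod_Suc)
  ultimately have "x 1 = y 1"
    by (metis mult.assoc mult_1_right)
  show "x = y"
  proof
    fix i
    show "x i = y i"
    proof (cases "i \<le> k + 1")
      case True
      then show ?thesis
        using box_sum_solution_eq_shoot[OF x eq True] box_sum_solution_eq_shoot[OF y refl True]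
          \<open>x 1 = y 1\<close> by metis
    qed (use x y in \<open>simp add: vecs_def\<close>)
  qed
qed

lemma box_sum_solvable:
  fixes b :: "nat \<Rightarrow> 'a::ring_1"
  assumes "k mod 3 \<noteq> 2" and b: "b \<in> vecs k"
  shows "\<exists>x\<in>vecs k. box_sum k x = b"
proof -
  let ?p = "period3 (k + 1) :: 'a"
  define t where "t = - shoot b 0 (k + 1) * ?p"
  have "?p * ?p = 1"
    using assms(1) by (intro period3_mult_self) (auto simp: mod_Suc)
  then have end0: "shoot b t (k + 1) = 0"
    by (subst shoot_eq) (simp add: t_def mult.assoc)
  define x where "x i = (if i \<in> {1..k} then shoot b t i else 0)" for i
  have x_shoot: "x i = shoot b t i" if "i \<le> k + 1" for i
    using that end0 by (cases "i = 0"; cases "i = k + 1") (auto simp: x_def)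
  have "box_sum k x i = b i" for i
  proof (cases "i \<in> {1..k}")
    case True
    then obtain j where "i = Suc j" "Suc (Suc j) \<le> k + 1"
      by (cases i) auto
    then show ?thesis
      using x_shoot[of j] x_shoot[of "Suc j"] x_shoot[of "Suc (Suc j)"] by (simp add: box_sum_def)
  qed (use b in \<open>auto simp: box_sum_def vecs_def\<close>)
  moreover have "x \<in> vecs k"
    by (simp add: x_def vecs_def)
  ultimately show ?thesis
    by blast
qed

lemma bij_betw_box_sum:
  assumes "k mod 3 \<noteq> 2"
  shows "bij_betw (box_sum k) (vecs k) (vecs k :: (nat \<Rightarrow> 'a::ring_1) set)"
proof -
  have "vecs k \<subseteq> box_sum k ` (vecs k :: (nat \<Rightarrow> 'a) set)"
    using box_sum_solvable[OF assms] by (metis image_eqI subsetI)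
  then show ?thesis
    unfolding bij_betw_def using inj_on_box_sum[OF assms] box_sum_in_vecs by blast
qed

definition mat_transpose :: "(nat \<Rightarrow> nat \<Rightarrow> 'a) \<Rightarrow> nat \<Rightarrow> nat \<Rightarrow> 'a" where
  "mat_transpose X i j = X j i"

lemma mats_iff_rows:
  "X \<in> mats m n \<longleftrightarrow> (\<forall>a. X a \<in> vecs n) \<and> (\<forall>a. a \<notin> {1..m} \<longrightarrow> X a = (\<lambda>_. 0))"
  by (auto simp: mats_def vecs_def fun_eq_iff)

lemma comp_in_mats:
  assumes "X \<in> mats m n" "h ` vecs n \<subseteq> vecs n" "h (\<lambda>_. 0) = (\<lambda>_. 0)"
  shows "h \<circ> X \<in> mats m n"
  using assms unfolding mats_iff_rows by (simp add: image_subset_iff)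

lemma bij_betw_rowwise:
  assumes f: "bij_betw f (vecs n) (vecs n)" and f0: "f (\<lambda>_. 0) = (\<lambda>_. 0)"
  shows "bij_betw ((\<circ>) f) (mats m n) (mats m n)"
proof -
  define g where "g = inv_into (vecs n) f"
  have g: "bij_betw g (vecs n) (vecs n)"
    unfolding g_def using f by (rule bij_betw_inv_into)
  have "(\<lambda>_. 0) \<in> vecs n"
    by (simp add: vecs_def)
  then have g0: "g (\<lambda>_. 0) = (\<lambda>_. 0)"
    using bij_betw_inv_into_left[OF f] f0 by (metis g_def)
  show ?thesis
  proof (rule bij_betw_byWitness[where f' = "(\<circ>) g"])
    show "\<forall>X\<in>mats m n. g \<circ> (f \<circ> X) = X" "\<forall>Y\<in>mats m n. f \<circ> (g \<circ> Y) = Y"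
      using bij_betw_inv_into_left[OF f] bij_betw_inv_into_right[OF f]
      by (auto simp: mats_iff_rows g_def fun_eq_iff)
    show "(\<circ>) f ` mats m n \<subseteq> mats m n" "(\<circ>) g ` mats m n \<subseteq> mats m n"
      using comp_in_mats f g f0 g0 by (auto simp: bij_betw_def)
  qed
qed

lemma bij_betw_mat_transpose: "bij_betw mat_transpose (mats m n) (mats n m)"
  by (rule bij_betw_byWitness[where f' = mat_transpose])
    (auto simp: mat_transpose_def mats_def fun_eq_iff)

lemma bij_betw_mats_divide:
  assumes "c \<noteq> 0"
  shows "bij_betw (\<lambda>X i j. X i j / c) (mats m n) (mats m n)"
  by (rule bij_betw_byWitness[where f' = "\<lambda>X i j. X i j * c"])
    (use assms in \<open>auto simp: mats_def\<close>)

lemma zb_eq: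
  assumes "X \<in> mats m n" "a \<ge> 0" "b \<ge> 0"
  shows "zb m n X a b = X (nat a) (nat b)"
proof (cases "1 \<le> a \<and> a \<le> int m \<and> 1 \<le> b \<and> b \<le> int n")
  case False
  then have "\<not> (1 \<le> nat a \<and> nat a \<le> m \<and> 1 \<le> nat b \<and> nat b \<le> n)"
    using assms(2,3) by auto
  with False show ?thesis
    using assms(1) by (simp add: zb_def mats_def)
qed (simp add: zb_def)

lemma conv_box_blur_eq:
  assumes X: "X \<in> mats m n"
  shows "conv m n box_blur X = (\<lambda>i j. box_sum m (\<lambda>a. box_sum n (X a) j) i / 9)"
proof (intro ext)
  fix i j
  show "conv m n box_blur X i j = box_sum m (\<lambda>a. box_sum n (X a) j) i / 9"
  proof (cases "i \<in> {1..m} \<and> j \<in> {1..n}")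
    case True
    have "{1..3::nat} = {1, 2, 3}" "nat (1 + int a) = Suc a" "nat (int a - 1) = a - 1" for a
      by auto
    with True show ?thesis
      by (simp add: conv_def box_sum_def box_blur_def zb_eq[OF X] field_simps)
  qed (auto simp: conv_def box_sum_def)
qed

lemma conv_box_blur_tensor:
  assumes "u \<in> vecs m" "w \<in> vecs n"
  shows "conv m n box_blur (\<lambda>i j. u i * w j) = (\<lambda>i j. box_sum m u i * box_sum n w j / 9)"
proof -
  have "(\<lambda>i j. u i * w j) \<in> mats m n"
    using assms by (auto simp: mats_def vecs_def)
  then show ?thesis
    by (simp add: conv_box_blur_eq box_sum_mult_left box_sum_mult_right)
qed

lemma bij_betw_conv_box_blur:
  assumes "m mod 3 \<noteq> 2" "n mod 3 \<noteq> 2"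
  shows "bij_betw (conv m n box_blur) (mats m n) (mats m n)"
proof -
  have rows: "bij_betw ((\<circ>) (box_sum k)) (mats l k) (mats l k)" if "k mod 3 \<noteq> 2" for k l
    using that by (intro bij_betw_rowwise bij_betw_box_sum box_sum_zero)
  have "bij_betw (mat_transpose \<circ> (\<circ>) (box_sum n)) (mats m n) (mats n m)"
    using rows[OF assms(2)] bij_betw_mat_transpose by (rule bij_betw_trans)
  then have "bij_betw ((\<circ>) (box_sum m) \<circ> (mat_transpose \<circ> (\<circ>) (box_sum n))) (mats m n) (mats n m)"
    using rows[OF assms(1)] by (rule bij_betw_trans)
  then have "bij_betw (mat_transpose \<circ> ((\<circ>) (box_sum m) \<circ> (mat_transpose \<circ> (\<circ>) (box_sum n))))
      (mats m n) (mats m n)"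
    using bij_betw_mat_transpose by (rule bij_betw_trans)
  then have "bij_betw ((\<lambda>X i j. X i j / 9) \<circ>
      (mat_transpose \<circ> ((\<circ>) (box_sum m) \<circ> (mat_transpose \<circ> (\<circ>) (box_sum n))))) (mats m n) (mats m n)"
    using bij_betw_mats_divide by (rule bij_betw_trans) simp
  then show ?thesis
    by (rule bij_betw_cong[THEN iffD1, rotated])
      (simp add: conv_box_blur_eq mat_transpose_def[abs_def])
qed

lemma not_inj_on_conv_box_blur:
  assumes "m \<ge> 1" "n \<ge> 1" "m mod 3 = 2 \<or> n mod 3 = 2"
  shows "\<not> inj_on (conv m n box_blur) (mats m n)"
proof -
  define e where "e k i = (if i \<in> {1..k::nat} then 1 else 0 :: real)" for k i
  have e: "e k \<in> vecs k" "k \<ge> 1 \<Longrightarrow> e k 1 = 1" for k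
    by (simp_all add: e_def vecs_def)
  have p: "period3_on k \<in> vecs k" "k mod 3 = 2 \<Longrightarrow> period3_on k 1 = (1 :: real)" for k
    by (auto simp: period3_on_in_vecs period3_on_def)
  obtain u w :: "nat \<Rightarrow> real" where uw: "u \<in> vecs m" "w \<in> vecs n" "u 1 * w 1 \<noteq> 0"
    and ker: "box_sum m u = (\<lambda>_. 0) \<or> box_sum n w = (\<lambda>_. 0)"
  proof (cases "m mod 3 = 2")
    case True
    then show ?thesis
      by (intro that[of "period3_on m" "e n"])
        (use assms e p box_sum_period3_on[where 'a = real] in auto)
  next
    case False
    then have "n mod 3 = 2"
      using assms(3) by blast
    then show ?thesis
      by (intro that[of "e m" "period3_on n"])
        (use assms e p box_sum_period3_on[where 'a = real] in auto)
  qed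
  let ?X = "\<lambda>i j. u i * w j"
  have "?X \<in> mats m n" "(\<lambda>_ _. 0) \<in> mats m n"
    using uw by (auto simp: mats_def vecs_def)
  moreover have "conv m n box_blur ?X = conv m n box_blur (\<lambda>_ _. 0)"
    using ker conv_box_blur_tensor[OF uw(1,2)] conv_box_blur_tensor[of "\<lambda>_. 0" m "\<lambda>_. 0" n]
    by (auto simp: vecs_def box_sum_zero)
  moreover have "?X \<noteq> (\<lambda>_ _. 0)"
    using uw(3) by metis
  ultimately show ?thesis
    by (meson inj_onD)
qed

lemma three_mult_minus_one_iff: "k \<in> {3 * l - 1 | l::nat. l \<ge> 1} \<longleftrightarrow> k mod 3 = 2"
proof
  assume "k \<in> {3 * l - 1 | l::nat. l \<ge> 1}"
  then obtain l where "k = 3 * l - 1" "l \<ge> 1"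
    by blast
  then have "k = 2 + 3 * (l - 1)"
    by linarith
  then show "k mod 3 = 2"
    by (simp only: mod_mult_self2) simp
next
  assume "k mod 3 = 2"
  then have "k = 3 * (k div 3) + 2"
    using div_mult_mod_eq[of k 3] by linarith
  then have "k = 3 * (k div 3 + 1) - 1"
    by simp
  moreover have "k div 3 + 1 \<ge> 1"
    by simp
  ultimately show "k \<in> {3 * l - 1 | l::nat. l \<ge> 1}"
    by blast
qed

theorem corollary1:
  fixes m n :: nat
  assumes "m \<ge> 1" and "n \<ge> 1"
  shows "(\<forall>B\<in>mats m n. \<exists>!X. X \<in> mats m n \<and> conv m n box_blur X = B)
         \<longleftrightarrow> (m \<notin> {3*l - 1 | l::nat. l \<ge> 1} \<and> n \<notin> {3*l - 1 | l::nat. l \<ge> 1})"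
proof -
  have "conv m n box_blur ` mats m n \<subseteq> mats m n"
    by (auto simp: conv_def mats_def)
  then have "(\<forall>B\<in>mats m n. \<exists>!X. X \<in> mats m n \<and> conv m n box_blur X = B)
      \<longleftrightarrow> bij_betw (conv m n box_blur) (mats m n) (mats m n)"
    by (simp add: bij_betw_self_iff_ex1)
  also have "\<dots> \<longleftrightarrow> m mod 3 \<noteq> 2 \<and> n mod 3 \<noteq> 2"
    using bij_betw_conv_box_blur not_inj_on_conv_box_blur[OF assms] bij_betw_imp_inj_on by blast
  finally show ?thesis
    unfolding three_mult_minus_one_iff .
qed

end
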